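(* Let $G$ be a finite group, $H\subseteq G$ of index $2$, $\sigma\in G\setminus H$, $\chi:H\to\mathbb{C}^\times$ a character with $\rho=\mathrm{Ind}_H^G(\chi)$ faithful, and suppose $\epsilon_\chi=\chi^\sigma/\chi$ has order exactly $2$. Let $K=\ker(\epsilon_\chi)$ and $\chi_K=\chi|_K$. Then for every subgroup $H'\subset G$ of index $2$ and character $\chi':H'\to\mathbb{C}^\times$ with $\rho\cong \mathrm{Ind}_{H'}^G(\chi')$ one has $K\subseteq H'$ and $\chi'|_K=\chi_K$; moreover $g^2\in K$ for all $g\in G$ and $$\mathrm{tr}(\rho(g))=\begin{cases}2\chi_K(g)& g\in K,\\ 0 & g\notin K,\end{cases}\qquad \det(\rho(g))=\begin{cases}\chi_K(g^2)& g\in K,\\ -\chi_K(g^2)& g\notin K.\end{cases}$$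
   Context: $\chi^\sigma(h)=\chi(\sigma^{-1}h\sigma)$ for $h\in H$; for $H$ of index $2$ this is independent of $\sigma\in G\setminus H$. *)

theory Defs
  imports "HOL-Algebra.Algebra" "Jordan_Normal_Form.Determinant"
begin

definition lin_char :: "('a, 'b) monoid_scheme \<Rightarrow> 'a set \<Rightarrow> ('a \<Rightarrow> complex) \<Rightarrow> bool" where
  "lin_char G H chi \<longleftrightarrow> (\<forall>h\<in>H. chi h \<noteq> 0) \<and>
     (\<forall>x\<in>H. \<forall>y\<in>H. chi (x \<otimes>\<^bsub>G\<^esub> y) = chi x * chi y)"

text \<open>Induced representation Ind_H^G(chi) for H of index 2, as 2x2 matrices in the basis
  1 (x) 1, s (x) 1 where s is a (chosen) element of G outside H.\<close>
definition ind_rep :: "('a, 'b) monoid_scheme \<Rightarrow> 'a set \<Rightarrow> ('a \<Rightarrow> complex) \<Rightarrow> 'a \<Rightarrow> complex mat" where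
  "ind_rep G H chi g =
     (let s = (SOME s. s \<in> carrier G - H) in
      if g \<in> H then mat_of_rows_list 2 [[chi g, 0], [0, chi (inv\<^bsub>G\<^esub> s \<otimes>\<^bsub>G\<^esub> g \<otimes>\<^bsub>G\<^esub> s)]]
      else mat_of_rows_list 2 [[0, chi (g \<otimes>\<^bsub>G\<^esub> s)], [chi (inv\<^bsub>G\<^esub> s \<otimes>\<^bsub>G\<^esub> g), 0]])"

definition mat_trace :: "complex mat \<Rightarrow> complex" where
  "mat_trace A = (\<Sum>i<dim_row A. A $$ (i, i))"

definition faithful_rep :: "('a, 'b) monoid_scheme \<Rightarrow> ('a \<Rightarrow> complex mat) \<Rightarrow> bool" where
  "faithful_rep G rho \<longleftrightarrow> (\<forall>g\<in>carrier G. rho g = 1\<^sub>m 2 \<longrightarrow> g = \<one>\<^bsub>G\<^esub>)"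

definition rep_iso2 :: "('a, 'b) monoid_scheme \<Rightarrow> ('a \<Rightarrow> complex mat) \<Rightarrow> ('a \<Rightarrow> complex mat) \<Rightarrow> bool" where
  "rep_iso2 G rho1 rho2 \<longleftrightarrow> (\<exists>P \<in> carrier_mat 2 2. invertible_mat P \<and>
      (\<forall>g\<in>carrier G. P * rho1 g = rho2 g * P))"

end

theory Submission
  imports Defs
begin

text \<open>For \<open>g \<in> H\<close> the matrix of \<open>Ind(\<chi>)\<close> is \<open>diag(\<chi> g, \<chi>\<^sup>\<sigma> g)\<close>;
  for \<open>g \<notin> H\<close> it is antidiagonal with entries \<open>\<chi>(g s)\<close>, \<open>\<chi>(s\<^sup>-\<^sup>1 g)\<close>
  (\<open>s \<notin> H\<close> the chosen coset representative), whose product is \<open>\<chi>(g\<^sup>2)\<close>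
  because any two elements outside an index-2 subgroup multiply into it.
  As \<open>\<epsilon> = \<chi>\<^sup>\<sigma>/\<chi>\<close> squares to 1, \<open>\<chi>\<^sup>\<sigma> = \<plusminus>\<chi>\<close> on \<open>H\<close>
  with sign \<open>+\<close> exactly on \<open>K\<close>, which gives trace and determinant.
  Squares lie in \<open>K\<close>: on \<open>H\<close> because \<open>\<epsilon>(g\<^sup>2) = \<epsilon>(g)\<^sup>2\<close>, and for
  \<open>g \<notin> H\<close> because \<open>\<chi>\<^sup>\<sigma>\<close> does not depend on the choice of \<open>\<sigma> \<notin> H\<close>,
  so one may conjugate \<open>g\<^sup>2\<close> by \<open>g\<close> itself.
  If \<open>Ind(\<chi>) \<cong> Ind\<^sub>H\<^sub>'(\<chi>')\<close>, trace and determinant agree: at \<open>k \<in> K\<close>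
  the trace \<open>2 \<chi> k \<noteq> 0\<close> forces \<open>k \<in> H'\<close>, and then the diagonal entries have
  sum \<open>2 \<chi> k\<close> and product \<open>(\<chi> k)\<^sup>2\<close>, so both equal \<open>\<chi> k\<close>.\<close>

lemma det_mat_2:
  fixes A :: "'a :: comm_ring_1 mat"
  assumes "A \<in> carrier_mat 2 2"
  shows "det A = A $$ (0,0) * A $$ (1,1) - A $$ (0,1) * A $$ (1,0)"
proof -
  have "det A = (\<Sum>i<2. A $$ (i,0) * cofactor A i 0)"
    by (rule laplace_expansion_column[OF assms]) simp
  also have "\<dots> = A $$ (0,0) * A $$ (1,1) - A $$ (0,1) * A $$ (1,0)"
    using assms
    by (simp add: numeral_2_eq_2 cofactor_def mat_delete_def det_single lessThan_Suc)
  finally show ?thesis .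
qed

lemma mat_trace_2:
  assumes "A \<in> carrier_mat 2 2"
  shows "mat_trace A = A $$ (0,0) + A $$ (1,1)"
  using assms by (simp add: mat_trace_def numeral_2_eq_2 lessThan_Suc)

lemma det_mat_of_rows_list_2:
  "det (mat_of_rows_list 2 [[a, b], [c, d]]) = a * d - b * (c :: 'a :: comm_ring_1)"
  by (subst det_mat_2) (auto simp: mat_of_rows_list_def numeral_2_eq_2)

lemma mat_trace_mat_of_rows_list_2:
  "mat_trace (mat_of_rows_list 2 [[a, b], [c, d]]) = a + d"
  by (simp add: mat_trace_def mat_of_rows_list_def numeral_2_eq_2 lessThan_Suc)

lemma similar_mat_if_intertwined:
  fixes A B P :: "'a :: comm_ring_1 mat"
  assumes A: "A \<in> carrier_mat n n" and B: "B \<in> carrier_mat n n" and P: "P \<in> carrier_mat n n"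
    and "invertible_mat P" and PA: "P * A = B * P"
  shows "similar_mat B A"
proof -
  obtain Q where PQ: "P * Q = 1\<^sub>m n" and QP: "Q * P = 1\<^sub>m (dim_row Q)"
    using \<open>invertible_mat P\<close> P unfolding invertible_mat_def inverts_mat_def by auto
  have Q: "Q \<in> carrier_mat n n"
    using arg_cong[OF PQ, of dim_col] arg_cong[OF QP, of dim_col] P by auto
  have "B = B * (P * Q)" using B PQ by simp
  also have "\<dots> = P * A * Q" using A B P Q PA by (simp add: assoc_mult_mat)
  finally have "B = P * A * Q" .
  then show ?thesis
    using A B P Q PQ QP by (intro similar_matI[of B A P Q n]) auto
qed

lemma det_intertwined:
  fixes A B P :: "'a :: comm_ring_1 mat"
  assumes "A \<in> carrier_mat n n" "B \<in> carrier_mat n n" "P \<in> carrier_mat n n"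
    and "invertible_mat P" and "P * A = B * P"
  shows "det B = det A"
  using det_similar[OF similar_mat_if_intertwined[OF assms]] assms(2) by blast

text \<open>For 2 \<times> 2 matrices \<open>det (A + 1) = det A + tr A + 1\<close>.\<close>
lemma mat_trace_intertwined:
  fixes A B P :: "complex mat"
  assumes A: "A \<in> carrier_mat 2 2" and B: "B \<in> carrier_mat 2 2" and P: "P \<in> carrier_mat 2 2"
    and inv: "invertible_mat P" and PA: "P * A = B * P"
  shows "mat_trace B = mat_trace A"
proof -
  have "P * (A + 1\<^sub>m 2) = (B + 1\<^sub>m 2) * P"
    using A B P PA by (simp add: mult_add_distrib_mat add_mult_distrib_mat)
  then have "det (B + 1\<^sub>m 2) = det (A + 1\<^sub>m 2)"
    using A B P inv by (intro det_intertwined) auto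
  moreover have "det (C + 1\<^sub>m 2) = det C + mat_trace C + 1" if "C \<in> carrier_mat 2 2" for C
    using that by (simp add: det_mat_2 mat_trace_2 algebra_simps)
  ultimately show ?thesis
    using A B det_intertwined[OF assms] by simp
qed

lemma rep_iso2_det:
  assumes "rep_iso2 G \<rho> \<rho>'" "g \<in> carrier G"
    and "\<rho> g \<in> carrier_mat 2 2" "\<rho>' g \<in> carrier_mat 2 2"
  shows "det (\<rho>' g) = det (\<rho> g)"
  using assms det_intertwined unfolding rep_iso2_def by metis

lemma rep_iso2_mat_trace:
  assumes "rep_iso2 G \<rho> \<rho>'" "g \<in> carrier G"
    and "\<rho> g \<in> carrier_mat 2 2" "\<rho>' g \<in> carrier_mat 2 2"
  shows "mat_trace (\<rho>' g) = mat_trace (\<rho> g)"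
  using assms mat_trace_intertwined unfolding rep_iso2_def by metis

lemma ind_rep_carrier_mat: "ind_rep G H \<chi> g \<in> carrier_mat 2 2"
  unfolding ind_rep_def Let_def by (auto simp: mat_of_rows_list_def)

lemma mat_trace_ind_rep_outside:
  assumes "g \<notin> H"
  shows "mat_trace (ind_rep G H \<chi> g) = 0"
  using assms unfolding ind_rep_def Let_def by (simp add: mat_trace_mat_of_rows_list_2)

lemma lin_charD:
  assumes "lin_char G H \<chi>"
  shows "h \<in> H \<Longrightarrow> \<chi> h \<noteq> 0"
    and "x \<in> H \<Longrightarrow> y \<in> H \<Longrightarrow> \<chi> (x \<otimes>\<^bsub>G\<^esub> y) = \<chi> x * \<chi> y"
  using assms unfolding lin_char_def by auto

lemma (in group) lin_char_one:
  assumes "subgroup H G" "lin_char G H \<chi>"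
  shows "\<chi> \<one> = 1"
proof -
  have one: "\<one> \<in> H" using assms(1) by (rule subgroup.one_closed)
  then have "\<chi> \<one> = \<chi> \<one> * \<chi> \<one>"
    using lin_charD(2)[OF assms(2) one one] by simp
  then show ?thesis using lin_charD(1)[OF assms(2) one] by simp
qed

lemma (in group) lin_char_conj_invariant:
  assumes "subgroup H G" "lin_char G H \<chi>" "u \<in> H" "x \<in> H"
  shows "\<chi> (inv u \<otimes> x \<otimes> u) = \<chi> x"
proof -
  have "inv u \<in> H" using assms by (simp add: subgroup.m_inv_closed)
  moreover have "inv u \<otimes> u = \<one>" using assms by (simp add: subgroup.mem_carrier)
  ultimately have "\<chi> (inv u) * \<chi> u = 1"
    using assms lin_char_one lin_charD(2) by metis
  moreover have "\<chi> (inv u \<otimes> x \<otimes> u) = \<chi> (inv u) * \<chi> x * \<chi> u"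
    using assms \<open>inv u \<in> H\<close> lin_charD(2)[OF assms(2)] subgroup.m_closed[OF assms(1)] by metis
  ultimately show ?thesis by (simp add: algebra_simps)
qed

locale index_two = group G + subgroup H G for G (structure) and H +
  assumes card_rcosets: "card (rcosets H) = 2"
begin

lemma mult_outside_mem:
  assumes g: "g \<in> carrier G - H" and s: "s \<in> carrier G - H"
  shows "g \<otimes> s \<in> H"
proof (rule ccontr)
  assume gs: "g \<otimes> s \<notin> H"
  have gsG: "g \<otimes> s \<in> carrier G" using g s by auto
  have "H \<in> rcosets H"
    using rcosetsI[OF subset, of \<one>] coset_mult_one[OF subset] by simp
  moreover have "H #> s \<in> rcosets H" "H #> (g \<otimes> s) \<in> rcosets H"
    using s gsG rcosetsI[OF subset] by auto
  moreover have "H #> s \<noteq> H" "H #> (g \<otimes> s) \<noteq> H"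
    using s gs gsG rcos_self[OF _ is_subgroup] by auto
  moreover obtain x y where "rcosets H = {x, y}"
    using card_rcosets card_2_iff by metis
  ultimately have "H #> (g \<otimes> s) = H #> s" by auto
  then have "g \<otimes> s \<in> H #> s" using rcos_self[OF gsG is_subgroup] by simp
  then obtain h where "h \<in> H" "g \<otimes> s = h \<otimes> s" unfolding r_coset_def by auto
  then show False using g s by (metis DiffD1 DiffD2 mem_carrier r_cancel)
qed

lemma inv_outside:
  assumes "s \<in> carrier G - H"
  shows "inv s \<in> carrier G - H"
  using assms by (metis DiffD1 DiffD2 DiffI inv_closed inv_inv m_inv_closed)

sublocale normal H G
proof -
  have "x \<otimes> h \<otimes> inv x \<in> H" if x: "x \<in> carrier G" and h: "h \<in> H" for x h
  proof (cases "x \<in> H")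
    case True
    then show ?thesis using h by simp
  next
    case False
    have "x \<otimes> h \<notin> H"
    proof
      assume "x \<otimes> h \<in> H"
      then have "x \<otimes> h \<otimes> inv h \<in> H" using h by simp
      then show False using False x h by (simp add: m_assoc)
    qed
    then show ?thesis
      using mult_outside_mem[of "x \<otimes> h" "inv x"] inv_outside[of x] False x h by auto
  qed
  then show "H \<lhd> G" using normal_inv_iff is_subgroup by blast
qed

lemma exists_outside: obtains s where "s \<in> carrier G - H"
proof -
  have "\<not> carrier G \<subseteq> H"
  proof
    assume "carrier G \<subseteq> H"
    then have "rcosets H \<subseteq> {H}"
      unfolding RCOSETS_def using rcos_const[OF is_group] by auto
    then show False using card_rcosets card_mono[of "{H}" "rcosets H"] by auto
  qed
  then show ?thesis using that by blast
qed

lemma lin_char_conj_independent: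
  assumes "lin_char G H \<chi>" "h \<in> H" and s: "s \<in> carrier G - H" and t: "t \<in> carrier G - H"
  shows "\<chi> (inv s \<otimes> h \<otimes> s) = \<chi> (inv t \<otimes> h \<otimes> t)"
proof -
  define u where "u = inv t \<otimes> s"
  have "u \<in> H" unfolding u_def using mult_outside_mem[OF inv_outside[OF t] s] .
  moreover have "inv t \<otimes> h \<otimes> t \<in> H" using assms(2) t by (simp add: inv_op_closed1)
  moreover have "inv s \<otimes> h \<otimes> s = inv u \<otimes> (inv t \<otimes> h \<otimes> t) \<otimes> u"
    unfolding u_def using s t assms(2)
    by (simp add: inv_mult_group m_assoc[symmetric]) (simp add: m_assoc)
  ultimately show ?thesis using lin_char_conj_invariant[OF is_subgroup assms(1)] by simp
qed

lemma mat_trace_ind_rep_mem: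
  assumes "lin_char G H \<chi>" "\<sigma> \<in> carrier G - H" "g \<in> H"
  shows "mat_trace (ind_rep G H \<chi> g) = \<chi> g + \<chi> (inv \<sigma> \<otimes> g \<otimes> \<sigma>)"
proof -
  have "(SOME s. s \<in> carrier G - H) \<in> carrier G - H"
    using assms(2) by (rule someI)
  then show ?thesis using assms lin_char_conj_independent
    unfolding ind_rep_def Let_def by (simp add: mat_trace_mat_of_rows_list_2)
qed

lemma det_ind_rep_mem:
  assumes "lin_char G H \<chi>" "\<sigma> \<in> carrier G - H" "g \<in> H"
  shows "det (ind_rep G H \<chi> g) = \<chi> g * \<chi> (inv \<sigma> \<otimes> g \<otimes> \<sigma>)"
proof -
  have "(SOME s. s \<in> carrier G - H) \<in> carrier G - H"
    using assms(2) by (rule someI)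
  then show ?thesis using assms lin_char_conj_independent
    unfolding ind_rep_def Let_def by (simp add: det_mat_of_rows_list_2)
qed

lemma det_ind_rep_outside:
  assumes "lin_char G H \<chi>" and g: "g \<in> carrier G - H"
  shows "det (ind_rep G H \<chi> g) = - \<chi> (g \<otimes> g)"
proof -
  define s where "s = (SOME s. s \<in> carrier G - H)"
  obtain \<sigma> where "\<sigma> \<in> carrier G - H" by (rule exists_outside)
  then have s: "s \<in> carrier G - H" unfolding s_def by (rule someI)
  have "g \<otimes> s \<otimes> (inv s \<otimes> g) = g \<otimes> g"
    using g s by (simp add: m_assoc[symmetric]) (simp add: m_assoc)
  then have "\<chi> (g \<otimes> s) * \<chi> (inv s \<otimes> g) = \<chi> (g \<otimes> g)"
    using lin_charD(2)[OF assms(1) mult_outside_mem[OF g s] mult_outside_mem[OF inv_outside[OF s] g]]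
    by simp
  then show ?thesis
    using g unfolding ind_rep_def Let_def s_def[symmetric] by (simp add: det_mat_of_rows_list_2)
qed

end

lemma eq_of_sum_and_product:
  fixes a b x :: "'a :: idom"
  assumes "a + b = 2 * x" "a * b = x * x"
  shows "a = x"
proof -
  have "(a - x) * (a - x) = a * a - a * (a + b) + a * b"
    using assms by (simp add: algebra_simps)
  also have "\<dots> = 0" by (simp add: algebra_simps)
  finally show ?thesis by simp
qed

locale quadratic_twist = index_two +
  fixes \<chi> :: "'a \<Rightarrow> complex" and \<sigma> K
  assumes lin_char: "lin_char G H \<chi>"
    and sigma_outside: "\<sigma> \<in> carrier G - H"
    and twist_square: "\<forall>h\<in>H. (\<chi> (inv \<sigma> \<otimes> h \<otimes> \<sigma>) / \<chi> h)\<^sup>2 = 1"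
    and K_def: "K = {h \<in> H. \<chi> (inv \<sigma> \<otimes> h \<otimes> \<sigma>) / \<chi> h = 1}"
begin

lemma K_subset: "K \<subseteq> H"
  using K_def by auto

lemma conj_char_eq:
  assumes "h \<in> H"
  shows "\<chi> (inv \<sigma> \<otimes> h \<otimes> \<sigma>) = (if h \<in> K then \<chi> h else - \<chi> h)"
proof -
  have "\<chi> (inv \<sigma> \<otimes> h \<otimes> \<sigma>) / \<chi> h = 1 \<or> \<chi> (inv \<sigma> \<otimes> h \<otimes> \<sigma>) / \<chi> h = -1"
    using twist_square assms power2_eq_1_iff by blast
  then show ?thesis
    using assms lin_charD(1)[OF lin_char] unfolding K_def by (auto simp: field_simps)
qed

lemma square_mem_K:
  assumes g: "g \<in> carrier G"
  shows "g \<otimes> g \<in> K"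
proof (cases "g \<in> H")
  case True
  have "inv \<sigma> \<otimes> (g \<otimes> g) \<otimes> \<sigma> = (inv \<sigma> \<otimes> g \<otimes> \<sigma>) \<otimes> (inv \<sigma> \<otimes> g \<otimes> \<sigma>)"
    using g sigma_outside by (simp add: m_assoc[symmetric]) (simp add: m_assoc)
  then have "\<chi> (inv \<sigma> \<otimes> (g \<otimes> g) \<otimes> \<sigma>) = \<chi> g * \<chi> g"
    using True sigma_outside conj_char_eq[OF True] lin_charD(2)[OF lin_char] inv_op_closed1
    by (auto split: if_splits)
  then show ?thesis
    using True lin_charD[OF lin_char] unfolding K_def by simp
next
  case False
  then have g': "g \<in> carrier G - H" using g by simp
  have "\<chi> (inv \<sigma> \<otimes> (g \<otimes> g) \<otimes> \<sigma>) = \<chi> (inv g \<otimes> (g \<otimes> g) \<otimes> g)"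
    using lin_char_conj_independent[OF lin_char mult_outside_mem[OF g' g'] sigma_outside g'] .
  also have "inv g \<otimes> (g \<otimes> g) \<otimes> g = g \<otimes> g"
    using g by (simp add: m_assoc[symmetric])
  finally show ?thesis
    using mult_outside_mem[OF g' g'] lin_charD(1)[OF lin_char] unfolding K_def by simp
qed

lemma mat_trace_ind_rep:
  assumes "g \<in> carrier G"
  shows "mat_trace (ind_rep G H \<chi> g) = (if g \<in> K then 2 * \<chi> g else 0)"
proof (cases "g \<in> H")
  case True
  then show ?thesis
    using conj_char_eq[OF True] mat_trace_ind_rep_mem[OF lin_char sigma_outside True] by simp
next
  case False
  then show ?thesis
    using K_subset mat_trace_ind_rep_outside by auto
qed

lemma det_ind_rep:
  assumes "g \<in> carrier G"
  shows "det (ind_rep G H \<chi> g) = (if g \<in> K then \<chi> (g \<otimes> g) else - \<chi> (g \<otimes> g))"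
proof (cases "g \<in> H")
  case True
  then show ?thesis
    using conj_char_eq[OF True] det_ind_rep_mem[OF lin_char sigma_outside True]
      lin_charD(2)[OF lin_char True True] by simp
next
  case False
  then show ?thesis
    using assms K_subset det_ind_rep_outside[OF lin_char] by auto
qed

lemma iso_ind_rep_agrees_on_K:
  assumes "subgroup H' G" "card (rcosets H') = 2" "lin_char G H' \<chi>'"
    and iso: "rep_iso2 G (ind_rep G H \<chi>) (ind_rep G H' \<chi>')"
    and k: "k \<in> K"
  shows "k \<in> H'" "\<chi>' k = \<chi> k"
proof -
  interpret H': index_two G H'
    using is_group assms(1,2) by (simp add: index_two_def index_two_axioms_def)
  have kH: "k \<in> H" and kG: "k \<in> carrier G" using k K_subset by auto
  have tr: "mat_trace (ind_rep G H' \<chi>' k) = 2 * \<chi> k"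
    using rep_iso2_mat_trace[OF iso kG ind_rep_carrier_mat ind_rep_carrier_mat]
      mat_trace_ind_rep[OF kG] k by simp
  have det: "det (ind_rep G H' \<chi>' k) = \<chi> k * \<chi> k"
    using rep_iso2_det[OF iso kG ind_rep_carrier_mat ind_rep_carrier_mat]
      det_ind_rep[OF kG] k lin_charD(2)[OF lin_char kH kH] by simp
  show kH': "k \<in> H'"
  proof (rule ccontr)
    assume "k \<notin> H'"
    then have "mat_trace (ind_rep G H' \<chi>' k) = 0" by (rule mat_trace_ind_rep_outside)
    then show False using tr lin_charD(1)[OF lin_char kH] by simp
  qed
  obtain \<sigma>' where \<sigma>': "\<sigma>' \<in> carrier G - H'" by (rule H'.exists_outside)
  show "\<chi>' k = \<chi> k"
  proof (rule eq_of_sum_and_product)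
    show "\<chi>' k + \<chi>' (inv \<sigma>' \<otimes> k \<otimes> \<sigma>') = 2 * \<chi> k"
      using tr H'.mat_trace_ind_rep_mem[OF assms(3) \<sigma>' kH'] by simp
    show "\<chi>' k * \<chi>' (inv \<sigma>' \<otimes> k \<otimes> \<sigma>') = \<chi> k * \<chi> k"
      using det H'.det_ind_rep_mem[OF assms(3) \<sigma>' kH'] by simp
  qed
qed

end

theorem mainTheorem2:
  fixes G :: "('a, 'b) monoid_scheme" and H :: "'a set" and \<sigma> :: 'a and \<chi> :: "'a \<Rightarrow> complex"
  assumes "group G" and "finite (carrier G)"
    and "subgroup H G" and "card (rcosets\<^bsub>G\<^esub> H) = 2"
    and "\<sigma> \<in> carrier G - H"
    and "lin_char G H \<chi>"
    and "faithful_rep G (ind_rep G H \<chi>)"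
    and "\<forall>h\<in>H. (\<chi> (inv\<^bsub>G\<^esub> \<sigma> \<otimes>\<^bsub>G\<^esub> h \<otimes>\<^bsub>G\<^esub> \<sigma>) / \<chi> h)\<^sup>2 = 1"
    and "\<exists>h\<in>H. \<chi> (inv\<^bsub>G\<^esub> \<sigma> \<otimes>\<^bsub>G\<^esub> h \<otimes>\<^bsub>G\<^esub> \<sigma>) / \<chi> h \<noteq> 1"
    and "K = {h \<in> H. \<chi> (inv\<^bsub>G\<^esub> \<sigma> \<otimes>\<^bsub>G\<^esub> h \<otimes>\<^bsub>G\<^esub> \<sigma>) / \<chi> h = 1}"
  shows "(\<forall>H' \<chi>'. subgroup H' G \<and> card (rcosets\<^bsub>G\<^esub> H') = 2 \<and> lin_char G H' \<chi>'
            \<and> rep_iso2 G (ind_rep G H \<chi>) (ind_rep G H' \<chi>')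
            \<longrightarrow> K \<subseteq> H' \<and> (\<forall>k\<in>K. \<chi>' k = \<chi> k))
      \<and> (\<forall>g\<in>carrier G. g \<otimes>\<^bsub>G\<^esub> g \<in> K)
      \<and> (\<forall>g\<in>carrier G. mat_trace (ind_rep G H \<chi> g) = (if g \<in> K then 2 * \<chi> g else 0))
      \<and> (\<forall>g\<in>carrier G. det (ind_rep G H \<chi> g) =
            (if g \<in> K then \<chi> (g \<otimes>\<^bsub>G\<^esub> g) else - \<chi> (g \<otimes>\<^bsub>G\<^esub> g)))"
proof -
  interpret quadratic_twist G H \<chi> \<sigma> K
    using assms unfolding quadratic_twist_def quadratic_twist_axioms_def
      index_two_def index_two_axioms_def by blast
  show ?thesis
    using iso_ind_rep_agrees_on_K square_mem_K mat_trace_ind_rep det_ind_rep by blast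
qed

end
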